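(* Consider the following model. A principal P and an agent A interact over two periods $t\in\{1,2\}$. States $\omega_t\in\{0,1\}$ satisfy $\Pr[\omega_1=1]=\mu_0\in(0,1)$ and $\Pr[\omega_2=\omega\mid\omega_1=\omega]=\rho\in(1/2,1)$; neither player observes states directly. In each period A chooses $e_t\in\{0,1\}$; if $e_t=1$ he observes $\omega_t$, if $e_t=0$ he observes $\omega_t$ with probability $\pi\in(0,1)$ and nothing otherwise. A then reports $r_t\in\{\varnothing,\omega_t\}$ if he observed $\omega_t$ and $r_t=\varnothing$ otherwise. At the end of period 2, P chooses $x\in\{0,1\}$ according to a committed rule. A's payoff is $x-c(e_1+e_2)$ with $c>0$; A maximizes expected payoff and, when indifferent, follows the testing recommendation and discloses the observed result. Let $\gamma=c/(1-\pi)$ and $\mu_2(\varnothing)=\rho\mu_0+(1-\rho)(1-\mu_0)$. Consider the mechanism with recommendations $\sigma_1=0$, $\sigma_2(r_1)=\mathbb{1}[r_1=\varnothing]$ and assignment $\hat x(r_1,1)=1$, $\hat x(r_1,0)=0$ for all $r_1$, $\hat x(1,\varnothing)=1$, $\hat x(0,\varnothing)=0$, $\hat x(\varnothing,\varnothing)=0$. Then: A optimally does not test in period 2 after $r_1=1$ and after $r_1=0$ if and only if $\gamma>1-\rho$. Moreover, after $r_1=\varnothing$: (a) if $\gamma\le 1-\rho$, A optimally tests in period 2; (b) if $\gamma\in(1-\rho,\mu_2(\varnothing)]$, A optimally tests in period 2 if he disclosed all information available to him in period 1 (i.e., he did not withhold an observed result); (c) if $\gamma>\mu_2(\varnothing)$,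 A optimally does not test in period 2.
   Context: The mechanism described is the baseline mechanism (the principal's first-best testing and efficient assignments when her effective testing cost $k/(1-\pi)$ lies in $(1-\rho,\min\{\mu_2(\varnothing),1-\mu_2(\varnothing)\}]$), modified so that failure to report after a requested test yields assignment $0$. A's private belief about $\omega_2$ at the start of period 2 depends on what he privately observed in period 1. *)

theory Defs
  imports Complex_Main
begin

text \<open>States are encoded as bool (True = state 1, False = state 0).
  A report is either the empty message (Null, the paper's varnothing) or a state.\<close>
datatype rep = Null | Rep bool

datatype hist1 = Obs bool | NoObs

definition sigma2 :: "rep \<Rightarrow> bool" where
  "sigma2 r1 = (r1 = Null)"

fun xhat :: "rep \<Rightarrow> rep \<Rightarrow> real" where
  "xhat r1 (Rep w) = (if w then 1 else 0)"
| "xhat (Rep w) Null = (if w then 1 else 0)"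
| "xhat Null Null = 0"

text \<open>Modified mechanism: failure to report after a requested test yields assignment 0.\<close>
definition assign :: "rep \<Rightarrow> rep \<Rightarrow> real" where
  "assign r1 r2 = (if sigma2 r1 \<and> r2 = Null then 0 else xhat r1 r2)"

text \<open>Best achievable assignment in period 2 given what A observed about omega_2
  (Some w: observed omega_2 = w, may report Null or Rep w; None: must report Null).\<close>
definition best :: "rep \<Rightarrow> bool option \<Rightarrow> real" where
  "best r1 ob = (case ob of
      Some w \<Rightarrow> max (assign r1 Null) (assign r1 (Rep w))
    | None \<Rightarrow> assign r1 Null)"

text \<open>A's private belief that omega_1 = 1 given his period-1 history
  (no observation is uninformative: after e_1 = 0 it occurs w.p. 1-pi in both states,
   and after e_1 = 1 it never occurs).\<close>
definition belief1 :: "real \<Rightarrow> hist1 \<Rightarrow> real" where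
  "belief1 mu0 h = (case h of Obs w \<Rightarrow> (if w then 1 else 0) | NoObs \<Rightarrow> mu0)"

definition belief2 :: "real \<Rightarrow> real \<Rightarrow> hist1 \<Rightarrow> real" where
  "belief2 mu0 rho h = rho * belief1 mu0 h + (1 - rho) * (1 - belief1 mu0 h)"

text \<open>Continuation expected payoff (period-1 cost is sunk) from testing (e_2 = 1)
  and from not testing (e_2 = 0) in period 2, with optimal reporting afterwards.
  p is the probability pi of observing the state without testing.\<close>
definition V_test :: "real \<Rightarrow> real \<Rightarrow> real \<Rightarrow> hist1 \<Rightarrow> rep \<Rightarrow> real" where
  "V_test mu0 rho c h r1 =
     (let b = belief2 mu0 rho h in
      b * best r1 (Some True) + (1 - b) * best r1 (Some False) - c)"

definition V_notest :: "real \<Rightarrow> real \<Rightarrow> real \<Rightarrow> hist1 \<Rightarrow> rep \<Rightarrow> real" where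
  "V_notest mu0 rho p h r1 =
     (let b = belief2 mu0 rho h in
      p * (b * best r1 (Some True) + (1 - b) * best r1 (Some False)) + (1 - p) * best r1 None)"

text \<open>Testing in period 2 is optimal for A (weakly). "A optimally does not test"
  is rendered as: testing is not optimal, i.e. not testing is strictly better.\<close>
definition test_optimal :: "real \<Rightarrow> real \<Rightarrow> real \<Rightarrow> real \<Rightarrow> hist1 \<Rightarrow> rep \<Rightarrow> bool" where
  "test_optimal mu0 rho p c h r1 \<longleftrightarrow> V_test mu0 rho c h r1 \<ge> V_notest mu0 rho p h r1"

end

theory Submission
  imports Defs
begin

text \<open>Since silence after a requested test is assigned 0, the report \<open>r\<^sub>1 = \<emptyset>\<close> puts A in
  exactly the period-2 position of \<open>r\<^sub>1 = 0\<close>: only a disclosed \<open>\<omega>\<^sub>2 = 1\<close> yields assignment 1.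
  Testing then gains \<open>1\<close> exactly when \<open>\<omega>\<^sub>2 = 1\<close> would otherwise have gone unobserved, i.e. with
  probability \<open>(1 - \<pi>) \<mu>\<close> for A's belief \<open>\<mu>\<close>, so it is optimal iff \<open>\<gamma> \<le> \<mu>\<close>. After \<open>r\<^sub>1 = 1\<close> the
  assignment is 1 whatever A reports, so testing is pure cost. The theorem follows because
  every period-1 history leaves A with belief at least \<open>1 - \<rho>\<close>, with equality after
  observing \<open>\<omega>\<^sub>1 = 0\<close>, and with belief \<open>\<mu>\<^sub>2(\<emptyset>)\<close> after observing nothing.\<close>

lemma assign_Null_eq_assign_Rep_False: "assign Null = assign (Rep False)"
proof
  fix r2 show "assign Null r2 = assign (Rep False) r2"
    by (cases r2) (simp_all add: assign_def sigma2_def)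
qed

lemma test_optimal_Rep_False_iff:
  assumes "p < 1"
  shows "test_optimal mu0 rho p c h (Rep False) \<longleftrightarrow> c / (1 - p) \<le> belief2 mu0 rho h"
proof -
  have "test_optimal mu0 rho p c h (Rep False) \<longleftrightarrow> c \<le> belief2 mu0 rho h * (1 - p)"
    by (simp add: test_optimal_def V_test_def V_notest_def best_def assign_def sigma2_def
        Let_def algebra_simps)
  also have "\<dots> \<longleftrightarrow> c / (1 - p) \<le> belief2 mu0 rho h"
    using assms by (simp add: pos_divide_le_eq)
  finally show ?thesis .
qed

lemma test_optimal_Null_iff:
  assumes "p < 1"
  shows "test_optimal mu0 rho p c h Null \<longleftrightarrow> c / (1 - p) \<le> belief2 mu0 rho h"
  using test_optimal_Rep_False_iff[OF assms]
  by (simp add: test_optimal_def V_test_def V_notest_def best_def assign_Null_eq_assign_Rep_False)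

lemma not_test_optimal_Rep_True:
  assumes "0 < c"
  shows "\<not> test_optimal mu0 rho p c h (Rep True)"
  using assms
  by (simp add: test_optimal_def V_test_def V_notest_def best_def assign_def sigma2_def
      Let_def algebra_simps)

lemma belief2_Obs_False: "belief2 mu0 rho (Obs False) = 1 - rho"
  by (simp add: belief2_def belief1_def)

lemma belief2_NoObs: "belief2 mu0 rho NoObs = rho * mu0 + (1 - rho) * (1 - mu0)"
  by (simp add: belief2_def belief1_def)

lemma belief2_ge_1_minus_rho:
  assumes "0 \<le> mu0" "1/2 \<le> rho"
  shows "1 - rho \<le> belief2 mu0 rho h"
proof (cases h)
  case (Obs w)
  then show ?thesis using assms by (cases w) (simp_all add: belief2_def belief1_def)
next
  case NoObs
  have "belief2 mu0 rho NoObs - (1 - rho) = mu0 * (2 * rho - 1)"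
    by (simp add: belief2_NoObs algebra_simps)
  also have "\<dots> \<ge> 0" using assms by simp
  finally show ?thesis using NoObs by simp
qed

theorem lemma1:
  fixes mu0 rho p c :: real
  assumes "0 < mu0" "mu0 < 1" "1/2 < rho" "rho < 1" "0 < p" "p < 1" "0 < c"
  shows "((\<not> test_optimal mu0 rho p c (Obs True) (Rep True)
            \<and> \<not> test_optimal mu0 rho p c (Obs False) (Rep False))
           \<longleftrightarrow> c / (1 - p) > 1 - rho)
    \<and> (c / (1 - p) \<le> 1 - rho \<longrightarrow> (\<forall>h. test_optimal mu0 rho p c h Null))
    \<and> (1 - rho < c / (1 - p) \<and> c / (1 - p) \<le> rho * mu0 + (1 - rho) * (1 - mu0)
           \<longrightarrow> test_optimal mu0 rho p c NoObs Null)
    \<and> (c / (1 - p) > rho * mu0 + (1 - rho) * (1 - mu0)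
           \<longrightarrow> \<not> test_optimal mu0 rho p c NoObs Null)"
proof -
  have after_Rep: "(\<not> test_optimal mu0 rho p c (Obs True) (Rep True)
            \<and> \<not> test_optimal mu0 rho p c (Obs False) (Rep False)) \<longleftrightarrow> c / (1 - p) > 1 - rho"
    using not_test_optimal_Rep_True[OF \<open>0 < c\<close>] test_optimal_Rep_False_iff[OF \<open>p < 1\<close>]
    by (auto simp: belief2_Obs_False)
  have after_Null: "test_optimal mu0 rho p c h Null \<longleftrightarrow> c / (1 - p) \<le> belief2 mu0 rho h" for h
    using test_optimal_Null_iff[OF \<open>p < 1\<close>] .
  have "1 - rho \<le> belief2 mu0 rho h" for h
    using belief2_ge_1_minus_rho assms by simp
  then show ?thesis
    using after_Rep after_Null belief2_NoObs by (auto intro: order_trans)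
qed

end
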